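(* Let $\ell\in\{1,2\}$. For each wavenumber $k>0$ let ${\cal H}\subset{\cal H}_0$, $a_\ell=a_\ell^{(k)}$, $C_{{\rm G1},\ell}$, $C_{{\rm G2},\ell}$, ${\mathcal A}_\ell={\mathcal A}_\ell^{(k)}$ be as in the context (the standing assumptions there hold), with ${\mathcal A}_\ell$ invertible. Suppose that given $k_0>0$ there exists $c>0$ such that $\|{\mathcal A}_\ell^{-1}\|_{{\cal H}_0\to{\cal H}}\ge c$ for all $k\ge k_0$. Given $p\in\mathbb{Z}^+$, let $({\cal H}_h)_{h>0}$ be a family of finite-dimensional subspaces of ${\cal H}$, and let $\Pi_h:{\cal H}\to{\cal H}_h$ be the ${\cal H}$-orthogonal projection. Suppose there exist $C_1,C_2,C_3>0$ such that, whenever $(kh)^{2p}\|{\mathcal A}_\ell^{-1}\|_{{\cal H}_0\to{\cal H}}\le C_1$, the following hold: for all $u\in{\cal H}$ and $u_h\in{\cal H}_h$ satisfying $a_\ell(u-u_h,v_h)=0$ for all $v_h\in{\cal H}_h$, $$\|u-u_h\|_{{\cal H}}\le C_2\Big(1+(kh)^p\|{\mathcal A}_\ell^{-1}\|_{{\cal H}_0\to{\cal H}}\Big)\|(I-\Pi_h)u\|_{{\cal H}},$$ and $$\|(I-\Pi_h){\mathcal A}_\ell^{-1}\|_{{\cal H}_0\to{\cal H}}\le C_3\Big(kh+(kh)^p\|{\mathcal A}_\ell^{-1}\|_{{\cal H}_0\to{\cal H}}\Big).$$ Then, given $0<\varepsilon\le C_1$, there exists $C_4>0$ such that if $(kh)^{2p}\|{\mathcal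 A}_\ell^{-1}\|_{{\cal H}_0\to{\cal H}}\le\varepsilon$ (and $k\ge k_0$), then $$\inf_{u_h\in{\cal H}_h\setminus\{0\}}\sup_{v_h\in{\cal H}_h\setminus\{0\}}\frac{|a_\ell(u_h,v_h)|}{\|u_h\|_{{\cal H}}\|v_h\|_{{\cal H}}}\ge\frac{1}{(C_{{\rm G1},\ell})^{-1}\Big(1+C_{{\rm G2},\ell}(1+C_2C_3C_4)\|{\mathcal A}_\ell^{-1}\|_{{\cal H}_0\to{\cal H}}\Big)}.$$
   Context: Standing assumptions: ${\cal H}\subset{\cal H}_0$ are complex Hilbert spaces with $\|v\|_{{\cal H}_0}\le\|v\|_{{\cal H}}$ for $v\in{\cal H}$, and ${\cal H}_0$ is identified with its dual so that ${\cal H}\subset{\cal H}_0\subset{\cal H}^*$. ${\mathcal D}:{\cal H}\to{\cal H}_0$ is linear with $\|{\mathcal D}\|_{{\cal H}\to{\cal H}_0}\le 1$; $b(\cdot,\cdot)$ is a continuous sesquilinear form on ${\cal H}$; for $\ell=1,2$, $\mu_\ell^{-1}:{\cal H}_0\to{\cal H}_0$ and $\epsilon_\ell:{\cal H}_0\to{\cal H}_0$ are bounded linear operators, and $a_\ell(u,v):=(\mu_\ell^{-1}{\mathcal D}u,{\mathcal D}v)_{{\cal H}_0}+b(u,v)-(\epsilon_\ell u,v)_{{\cal H}_0}$ (these objects may depend on the parameter $k$). For $\ell=1,2$ there exist $C_{{\rm G1},\ell},C_{{\rm G2},\ell}>0$ with $|a_\ell(v,v)+C_{{\rm G2},\ell}\|v\|_{{\cal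 H}_0}^2|\ge C_{{\rm G1},\ell}\|v\|_{{\cal H}}^2$ for all $v\in{\cal H}$. ${\mathcal A}_\ell:{\cal H}\to{\cal H}^*$ is defined by $\langle{\mathcal A}_\ell u,v\rangle_{{\cal H}^*\times{\cal H}}=a_\ell(u,v)$, and $\|{\mathcal A}_\ell^{-1}\|_{{\cal H}_0\to{\cal H}}$ is the norm of ${\mathcal A}_\ell^{-1}$ restricted to ${\cal H}_0\subset{\cal H}^*$ as a map into ${\cal H}$. *)

theory Defs
  imports "HOL-Analysis.Analysis" "HOL-Library.Extended_Real"
begin

class cvector = ab_group_add +
  fixes scaleC :: "complex \<Rightarrow> 'a \<Rightarrow> 'a" (infixr "*\<^sub>C" 75)
  assumes scaleC_add_right: "c *\<^sub>C (x + y) = c *\<^sub>C x + c *\<^sub>C y"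
    and scaleC_add_left: "(c + d) *\<^sub>C x = c *\<^sub>C x + d *\<^sub>C x"
    and scaleC_scaleC: "c *\<^sub>C (d *\<^sub>C x) = (c * d) *\<^sub>C x"
    and scaleC_one: "1 *\<^sub>C x = x"

definition clin :: "('a::cvector \<Rightarrow> 'b::cvector) \<Rightarrow> bool" where
  "clin T \<longleftrightarrow> (\<forall>x y. T (x + y) = T x + T y) \<and> (\<forall>c x. T (c *\<^sub>C x) = c *\<^sub>C T x)"

definition antilin :: "('a::cvector \<Rightarrow> complex) \<Rightarrow> bool" where
  "antilin F \<longleftrightarrow> (\<forall>x y. F (x + y) = F x + F y) \<and> (\<forall>c x. F (c *\<^sub>C x) = cnj c * F x)"

definition sesq :: "('a::cvector \<Rightarrow> 'a \<Rightarrow> complex) \<Rightarrow> bool" where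
  "sesq s \<longleftrightarrow> (\<forall>u v w. s (u + v) w = s u w + s v w) \<and> (\<forall>c u w. s (c *\<^sub>C u) w = c * s u w)
     \<and> (\<forall>u v w. s u (v + w) = s u v + s u w) \<and> (\<forall>c u w. s u (c *\<^sub>C w) = cnj c * s u w)"

definition inner_prod :: "('a::cvector \<Rightarrow> 'a \<Rightarrow> complex) \<Rightarrow> bool" where
  "inner_prod ip \<longleftrightarrow> sesq ip \<and> (\<forall>x y. ip y x = cnj (ip x y)) \<and> (\<forall>x. x \<noteq> 0 \<longrightarrow> 0 < Re (ip x x))"

definition ipnorm :: "('a::cvector \<Rightarrow> 'a \<Rightarrow> complex) \<Rightarrow> 'a \<Rightarrow> real" where
  "ipnorm ip x = sqrt (Re (ip x x))"

definition hilbert :: "('a::cvector \<Rightarrow> 'a \<Rightarrow> complex) \<Rightarrow> bool" where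
  "hilbert ip \<longleftrightarrow> inner_prod ip \<and>
     (\<forall>X::nat \<Rightarrow> 'a. (\<forall>e>0. \<exists>N. \<forall>m\<ge>N. \<forall>n\<ge>N. ipnorm ip (X m - X n) < e)
        \<longrightarrow> (\<exists>L. (\<lambda>n. ipnorm ip (X n - L)) \<longlonglongrightarrow> 0))"

definition bdd_op :: "('a::cvector \<Rightarrow> real) \<Rightarrow> ('b::cvector \<Rightarrow> real) \<Rightarrow> ('a \<Rightarrow> 'b) \<Rightarrow> bool" where
  "bdd_op nX nY T \<longleftrightarrow> clin T \<and> (\<exists>C. \<forall>x. nY (T x) \<le> C * nX x)"

definition opnorm :: "('a::cvector \<Rightarrow> real) \<Rightarrow> ('b::cvector \<Rightarrow> real) \<Rightarrow> ('a \<Rightarrow> 'b) \<Rightarrow> real" where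
  "opnorm nX nY T = (SUP x. nY (T x) / nX x)"

definition bdd_sesq :: "('a::cvector \<Rightarrow> real) \<Rightarrow> ('a \<Rightarrow> 'a \<Rightarrow> complex) \<Rightarrow> bool" where
  "bdd_sesq n s \<longleftrightarrow> sesq s \<and> (\<exists>C. \<forall>u v. cmod (s u v) \<le> C * n u * n v)"

text \<open>Elements of the antidual H^*: bounded antilinear functionals.\<close>
definition dual_elem :: "('a::cvector \<Rightarrow> real) \<Rightarrow> ('a \<Rightarrow> complex) \<Rightarrow> bool" where
  "dual_elem n F \<longleftrightarrow> antilin F \<and> (\<exists>C. \<forall>v. cmod (F v) \<le> C * n v)"

text \<open>Standing assumptions of the context, for one fixed k and one fixed l.
  J is the inclusion H into H0 (injective, norm-nonincreasing); the last condition
  on J says H0 embeds injectively in H^* (identification H subset H0 subset H^*).\<close>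
definition standing_assms ::
  "('h::cvector \<Rightarrow> 'h \<Rightarrow> complex) \<Rightarrow> ('g::cvector \<Rightarrow> 'g \<Rightarrow> complex) \<Rightarrow> ('h \<Rightarrow> 'g) \<Rightarrow> ('h \<Rightarrow> 'g)
   \<Rightarrow> ('h \<Rightarrow> 'h \<Rightarrow> complex) \<Rightarrow> ('g \<Rightarrow> 'g) \<Rightarrow> ('g \<Rightarrow> 'g) \<Rightarrow> ('h \<Rightarrow> 'h \<Rightarrow> complex)
   \<Rightarrow> real \<Rightarrow> real \<Rightarrow> bool" where
  "standing_assms ipH ip0 J D b minv epsop a CG1 CG2 \<longleftrightarrow>
     hilbert ipH \<and> hilbert ip0 \<and>
     clin J \<and> inj J \<and> (\<forall>v. ipnorm ip0 (J v) \<le> ipnorm ipH v) \<and>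
     (\<forall>f. (\<forall>v. ip0 f (J v) = 0) \<longrightarrow> f = 0) \<and>
     clin D \<and> (\<forall>v. ipnorm ip0 (D v) \<le> ipnorm ipH v) \<and>
     bdd_sesq (ipnorm ipH) b \<and>
     bdd_op (ipnorm ip0) (ipnorm ip0) minv \<and> bdd_op (ipnorm ip0) (ipnorm ip0) epsop \<and>
     (\<forall>u v. a u v = ip0 (minv (D u)) (D v) + b u v - ip0 (epsop (J u)) (J v)) \<and>
     CG1 > 0 \<and> CG2 > 0 \<and>
     (\<forall>v. cmod (a v v + complex_of_real (CG2 * (ipnorm ip0 (J v))\<^sup>2)) \<ge> CG1 * (ipnorm ipH v)\<^sup>2)"

text \<open>Invertibility of the operator A : H \<rightarrow> H^* induced by the form a.\<close>
definition form_invertible :: "('h::cvector \<Rightarrow> 'h \<Rightarrow> complex) \<Rightarrow> ('h \<Rightarrow> 'h \<Rightarrow> complex) \<Rightarrow> bool" where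
  "form_invertible ipH a \<longleftrightarrow> (\<forall>F. dual_elem (ipnorm ipH) F \<longrightarrow> (\<exists>!u. \<forall>v. a u v = F v))"

text \<open>A^{-1} restricted to H0 (f in H0 acts on H via v \<mapsto> (f, v)_{H0}).\<close>
definition Ainv :: "('g::cvector \<Rightarrow> 'g \<Rightarrow> complex) \<Rightarrow> ('h::cvector \<Rightarrow> 'g) \<Rightarrow> ('h \<Rightarrow> 'h \<Rightarrow> complex) \<Rightarrow> 'g \<Rightarrow> 'h" where
  "Ainv ip0 J a f = (THE u. \<forall>v. a u v = ip0 f (J v))"

definition Ainv_norm :: "('h::cvector \<Rightarrow> 'h \<Rightarrow> complex) \<Rightarrow> ('g::cvector \<Rightarrow> 'g \<Rightarrow> complex) \<Rightarrow> ('h \<Rightarrow> 'g) \<Rightarrow> ('h \<Rightarrow> 'h \<Rightarrow> complex) \<Rightarrow> real" where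
  "Ainv_norm ipH ip0 J a = opnorm (ipnorm ip0) (ipnorm ipH) (Ainv ip0 J a)"

definition fd_csubspace :: "'a::cvector set \<Rightarrow> bool" where
  "fd_csubspace S \<longleftrightarrow> (\<exists>B. finite B \<and> S = {(\<Sum>x\<in>B. c x *\<^sub>C x) | c. True})"

definition orth_proj :: "('a::cvector \<Rightarrow> 'a \<Rightarrow> complex) \<Rightarrow> 'a set \<Rightarrow> 'a \<Rightarrow> 'a" where
  "orth_proj ip S u = (THE w. w \<in> S \<and> (\<forall>s\<in>S. ip (u - w) s = 0))"

end

(*
  Proof idea: a duality argument of Schatz type. Fix k and h, and write N for the norm of
  A^-1 : H0 -> H. Quasi-optimality with constant Q, together with the bound A on
  (I - Pi_h) A^-1, shows that the Galerkin approximation xi_h of xi = A^-1 f satisfies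
  |xi_h|_H <= (N + Q A) |f|_H0. Taking f = v_h and testing with v_h bounds |v_h|_H0^2 by
  beta (N + Q A) |v_h|_H, where beta bounds |a(., v_h)| on V_h; inserted into the Garding
  inequality this gives C_G1 |v_h|_H <= beta (1 + C_G2 (N + Q A)), an inf-sup bound for the
  adjoint form. Choosing v_h with a(w_h, v_h) = (w_h, u_h)_H on V_h (finite-dimensional Riesz
  representation) transfers it to the form a itself. Under (kh)^2p N <= eps and N >= c the
  product Q A = C2 C3 (1 + (kh)^p N) (kh + (kh)^p N) is at most C2 C3 C4 N.
  That A^-1 is bounded from H0 to H, so that N is meaningful, is the closed graph theorem,
  proved here from the Baire category theorem.
*)

theory Submission
  imports Defs
begin

interpretation cv: vector_space "scaleC :: complex \<Rightarrow> 'a \<Rightarrow> 'a::cvector"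
  by unfold_locales (auto simp: scaleC_add_right scaleC_add_left scaleC_scaleC scaleC_one)

lemma clin_linear: "clin T \<Longrightarrow> Vector_Spaces.linear scaleC scaleC T"
  unfolding clin_def by unfold_locales auto

lemma clin_simps:
  assumes "clin T"
  shows "T (x + y) = T x + T y" "T (c *\<^sub>C x) = c *\<^sub>C T x"
    "T 0 = 0" "T (- x) = - T x" "T (x - y) = T x - T y"
proof -
  interpret Vector_Spaces.linear scaleC scaleC T
    using assms by (rule clin_linear)
  show "T (x + y) = T x + T y" "T (c *\<^sub>C x) = c *\<^sub>C T x" "T 0 = 0" "T (- x) = - T x"
    "T (x - y) = T x - T y"
    by (simp_all add: add scale neg diff)
qed

lemma sesq_simps:
  assumes "sesq s"
  shows "s (u + v) w = s u w + s v w" "s (c *\<^sub>C u) w = c * s u w"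
    "s u (v + w) = s u v + s u w" "s u (c *\<^sub>C w) = cnj c * s u w"
    "s 0 w = 0" "s w 0 = 0" "s (- u) w = - s u w" "s w (- u) = - s w u"
    "s (u - v) w = s u w - s v w" "s w (u - v) = s w u - s w v"
proof -
  have add: "s (u + v) w = s u w + s v w" "s u (v + w) = s u v + s u w" for u v w
    using assms unfolding sesq_def by auto
  have scale: "s (c *\<^sub>C u) w = c * s u w" "s u (c *\<^sub>C w) = cnj c * s u w" for c u w
    using assms unfolding sesq_def by auto
  have zero: "s 0 w = 0" "s w 0 = 0" for w
    using add(1)[of 0 0 w] add(2)[of w 0 0] by simp_all
  have minus: "s (- u) w = - s u w" "s w (- u) = - s w u" for u w
    using add(1)[of "- u" u w] add(2)[of w "- u" u] zero by (simp_all add: eq_neg_iff_add_eq_0)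
  have diff: "s (u - v) w = s u w - s v w" "s w (u - v) = s w u - s w v" for u v w
    using add(1)[of u "- v" w] add(2)[of w u "- v"] minus(1)[of v w] minus(2)[of w v] by simp_all
  show "s (u + v) w = s u w + s v w" "s (c *\<^sub>C u) w = c * s u w"
    "s u (v + w) = s u v + s u w" "s u (c *\<^sub>C w) = cnj c * s u w"
    "s 0 w = 0" "s w 0 = 0" "s (- u) w = - s u w" "s w (- u) = - s w u"
    "s (u - v) w = s u w - s v w" "s w (u - v) = s w u - s w v"
    by (fact add scale zero minus diff)+
qed

locale complex_inner =
  fixes ip :: "'a::cvector \<Rightarrow> 'a \<Rightarrow> complex"
  assumes inner_prod_ip: "inner_prod ip"
begin

lemma sesq_ip: "sesq ip"
  using inner_prod_ip unfolding inner_prod_def by blast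

lemmas ip_simps = sesq_simps[OF sesq_ip]

lemma ip_commute: "ip y x = cnj (ip x y)"
  using inner_prod_ip unfolding inner_prod_def by blast

lemma ip_self_pos: "x \<noteq> 0 \<Longrightarrow> 0 < Re (ip x x)"
  using inner_prod_ip unfolding inner_prod_def by blast

lemma ip_self_nonneg: "0 \<le> Re (ip x x)"
  using ip_self_pos[of x] by (cases "x = 0") (auto simp: ip_simps)

lemma ip_self_eq: "ip x x = complex_of_real ((ipnorm ip x)\<^sup>2)"
proof -
  have "Im (ip x x) = Im (cnj (ip x x))"
    using ip_commute[of x x] by simp
  then have "Im (ip x x) = 0"
    by simp
  then show ?thesis
    unfolding ipnorm_def using ip_self_nonneg[of x] by (simp add: complex_eq_iff)
qed

lemma ipnorm_nonneg: "0 \<le> ipnorm ip x"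
  unfolding ipnorm_def using ip_self_nonneg[of x] by simp

lemma ipnorm_power2: "(ipnorm ip x)\<^sup>2 = Re (ip x x)"
  unfolding ipnorm_def using ip_self_nonneg[of x] by simp

lemma ipnorm_eq_0_iff: "ipnorm ip x = 0 \<longleftrightarrow> x = 0"
  unfolding ipnorm_def using ip_self_pos[of x] by (cases "x = 0") (auto simp: ip_simps)

lemma ipnorm_pos_iff: "0 < ipnorm ip x \<longleftrightarrow> x \<noteq> 0"
  using ipnorm_nonneg[of x] ipnorm_eq_0_iff[of x] by linarith

lemma ipnorm_zero [simp]: "ipnorm ip 0 = 0"
  by (simp add: ipnorm_eq_0_iff)

lemma cauchy_schwarz: "cmod (ip x y) \<le> ipnorm ip x * ipnorm ip y"
proof (cases "y = 0")
  case True
  then show ?thesis by (simp add: ip_simps)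
next
  case False
  define r where "r = (ipnorm ip y)\<^sup>2"
  have r: "r > 0"
    unfolding r_def using False by (simp add: ipnorm_eq_0_iff)
  define z where "z = ip x y"
  define t where "t = z / complex_of_real r"
  have "ip (x - t *\<^sub>C y) (x - t *\<^sub>C y) = ip x x - cnj t * ip x y - t * ip y x + t * cnj t * ip y y"
    by (simp add: ip_simps algebra_simps)
  also have "\<dots> = ip x x - cnj t * z - t * cnj z + t * cnj t * complex_of_real r"
    using ip_commute[of x y] ip_self_eq[of y] by (simp add: z_def r_def)
  also have "\<dots> = complex_of_real ((ipnorm ip x)\<^sup>2 - (cmod z)\<^sup>2 / r)"
    using r ip_self_eq[of x] complex_norm_square[of z] by (simp add: t_def field_simps)
  finally have "0 \<le> (ipnorm ip x)\<^sup>2 - (cmod z)\<^sup>2 / r"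
    using ip_self_nonneg[of "x - t *\<^sub>C y"] by simp
  then have "(cmod z)\<^sup>2 \<le> (ipnorm ip x * ipnorm ip y)\<^sup>2"
    using r by (simp add: r_def field_simps power_mult_distrib)
  then show ?thesis
    unfolding z_def by (meson ipnorm_nonneg mult_nonneg_nonneg power2_le_imp_le)
qed

lemma ipnorm_triangle: "ipnorm ip (x + y) \<le> ipnorm ip x + ipnorm ip y"
proof -
  have "ip (x + y) (x + y) = ip x x + ip x y + ip y x + ip y y"
    by (simp add: ip_simps)
  then have "(ipnorm ip (x + y))\<^sup>2 = (ipnorm ip x)\<^sup>2 + 2 * Re (ip x y) + (ipnorm ip y)\<^sup>2"
    using ip_commute[of x y] by (simp add: ipnorm_power2)
  also have "\<dots> \<le> (ipnorm ip x + ipnorm ip y)\<^sup>2"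
    using cauchy_schwarz[of x y] complex_Re_le_cmod[of "ip x y"]
    by (simp add: power2_eq_square algebra_simps)
  finally show ?thesis
    by (meson add_nonneg_nonneg ipnorm_nonneg power2_le_imp_le)
qed

lemma ipnorm_scaleC: "ipnorm ip (c *\<^sub>C x) = cmod c * ipnorm ip x"
proof -
  have "ip (c *\<^sub>C x) (c *\<^sub>C x) = complex_of_real ((cmod c * ipnorm ip x)\<^sup>2)"
    using ip_self_eq[of x] complex_norm_square[of c]
    by (simp add: ip_simps power_mult_distrib mult.assoc)
  then show ?thesis
    unfolding ip_self_eq of_real_eq_iff
    by (meson ipnorm_nonneg norm_ge_zero mult_nonneg_nonneg power2_eq_iff_nonneg)
qed

lemma ipnorm_minus: "ipnorm ip (- x) = ipnorm ip x"
  using ipnorm_scaleC[of "-1" x] by simp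

lemma ipnorm_minus_commute: "ipnorm ip (x - y) = ipnorm ip (y - x)"
  using ipnorm_minus[of "x - y"] by simp

lemma ipnorm_triangle_diff: "ipnorm ip (x - z) \<le> ipnorm ip (x - y) + ipnorm ip (y - z)"
  using ipnorm_triangle[of "x - y" "y - z"] by simp

lemma ipnorm_diff_le: "ipnorm ip (x - y) \<le> ipnorm ip x + ipnorm ip y"
  using ipnorm_triangle[of x "- y"] by (simp add: ipnorm_minus)

lemma ipnorm_triangle_sub: "ipnorm ip x \<le> ipnorm ip y + ipnorm ip (x - y)"
  using ipnorm_triangle[of y "x - y"] by simp

end

locale complex_hilbert =
  fixes ip :: "'a::cvector \<Rightarrow> 'a \<Rightarrow> complex"
  assumes hilbert_ip: "hilbert ip"

sublocale complex_hilbert \<subseteq> complex_inner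
  using hilbert_ip unfolding hilbert_def by unfold_locales blast

lemma (in complex_inner) geometric_increments_bound:
  assumes step: "\<And>n. ipnorm ip (P (Suc n) - P n) \<le> c / 2 ^ n"
  shows "ipnorm ip (P (m + k) - P m) \<le> 2 * c / 2 ^ m"
proof -
  have "ipnorm ip (P (m + k) - P m) \<le> 2 * c * (1 / 2 ^ m - 1 / 2 ^ (m + k))"
  proof (induction k)
    case 0
    then show ?case by simp
  next
    case (Suc k)
    have "ipnorm ip (P (m + Suc k) - P m)
        \<le> ipnorm ip (P (Suc (m + k)) - P (m + k)) + ipnorm ip (P (m + k) - P m)"
      using ipnorm_triangle_diff by simp
    also have "\<dots> \<le> c / 2 ^ (m + k) + 2 * c * (1 / 2 ^ m - 1 / 2 ^ (m + k))"
      using step Suc.IH by (rule add_mono)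
    also have "\<dots> = 2 * c * (1 / 2 ^ m - 1 / 2 ^ (m + Suc k))"
      by (simp add: field_simps)
    finally show ?case .
  qed
  also have "\<dots> \<le> 2 * c / 2 ^ m"
    using step[of 0] ipnorm_nonneg[of "P 1 - P 0"] by (simp add: field_simps)
  finally show ?thesis .
qed

context complex_hilbert
begin

lemma Cauchy_converges:
  assumes "\<forall>e>0. \<exists>N. \<forall>m\<ge>N. \<forall>n\<ge>N. ipnorm ip (X m - X n) < e"
  shows "\<exists>L. (\<lambda>n. ipnorm ip (X n - L)) \<longlonglongrightarrow> 0"
  using hilbert_ip assms unfolding hilbert_def by blast

lemma geometric_increments_converge:
  assumes step: "\<And>n. ipnorm ip (P (Suc n) - P n) \<le> c / 2 ^ n"
  shows "\<exists>u. (\<lambda>n. ipnorm ip (P n - u)) \<longlonglongrightarrow> 0"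
proof (rule Cauchy_converges, intro allI impI)
  fix e :: real
  assume "e > 0"
  have "(\<lambda>n. 4 * c / 2 ^ n) \<longlonglongrightarrow> 0"
    by (rule LIMSEQ_divide_realpow_zero) simp
  then have "eventually (\<lambda>n. 4 * c / 2 ^ n < e) sequentially"
    using \<open>e > 0\<close> order_tendstoD(2) by blast
  then obtain N where N: "4 * c / 2 ^ N < e"
    by (auto simp: eventually_sequentially)
  have near: "ipnorm ip (P n - P N) \<le> 2 * c / 2 ^ N" if "n \<ge> N" for n
    using geometric_increments_bound[OF step, of N "n - N"] that by simp
  have "ipnorm ip (P m - P n) < e" if "m \<ge> N" "n \<ge> N" for m n
  proof -
    have "ipnorm ip (P m - P n) \<le> ipnorm ip (P m - P N) + ipnorm ip (P n - P N)"
      using ipnorm_triangle_diff[of "P m" "P n" "P N"] ipnorm_minus_commute[of "P N" "P n"] by simp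
    also have "\<dots> \<le> 4 * c / 2 ^ N"
      using near[OF that(1)] near[OF that(2)] by simp
    finally show ?thesis
      using N by simp
  qed
  then show "\<exists>N. \<forall>m\<ge>N. \<forall>n\<ge>N. ipnorm ip (P m - P n) < e"
    by blast
qed

end

section \<open>The closed graph theorem\<close>

lemma (in complex_inner) Metric_space_ipnorm: "Metric_space UNIV (\<lambda>x y. ipnorm ip (x - y))"
proof
  show "0 \<le> ipnorm ip (x - y)" for x y
    by (rule ipnorm_nonneg)
  show "ipnorm ip (x - y) = ipnorm ip (y - x)" for x y
    by (rule ipnorm_minus_commute)
  show "ipnorm ip (x - z) \<le> ipnorm ip (x - y) + ipnorm ip (y - z)" for x y z
    by (rule ipnorm_triangle_diff)
  show "ipnorm ip (x - y) = 0 \<longleftrightarrow> x = y" for x y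
    by (simp add: ipnorm_eq_0_iff)
qed

lemma (in complex_hilbert) mcomplete_ipnorm: "Metric_space.mcomplete UNIV (\<lambda>x y. ipnorm ip (x - y))"
proof -
  interpret M: Metric_space UNIV "\<lambda>x y. ipnorm ip (x - y)"
    by (rule Metric_space_ipnorm)
  show ?thesis
    unfolding M.mcomplete_def
  proof (intro allI impI)
    fix \<sigma>
    assume "M.MCauchy \<sigma>"
    then have "\<forall>e>0. \<exists>N. \<forall>m n. N \<le> m \<longrightarrow> N \<le> n \<longrightarrow> ipnorm ip (\<sigma> m - \<sigma> n) < e"
      unfolding M.MCauchy_def by (elim conjE)
    then obtain L where "(\<lambda>n. ipnorm ip (\<sigma> n - L)) \<longlonglongrightarrow> 0"
      using Cauchy_converges[of \<sigma>] by auto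
    then have "\<forall>\<epsilon>>0. eventually (\<lambda>n. ipnorm ip (\<sigma> n - L) < \<epsilon>) sequentially"
      using order_tendstoD(2) by blast
    then show "\<exists>x. limitin M.mtopology \<sigma> x sequentially"
      by (auto simp: M.limitin_metric)
  qed
qed

lemma (in complex_hilbert) Baire_sublevel_dense_in_ball:
  fixes f :: "'a \<Rightarrow> real"
  obtains r x0 j where "r > 0"
    "\<And>y \<epsilon>. ipnorm ip (x0 - y) < r \<Longrightarrow> \<epsilon> > 0 \<Longrightarrow> \<exists>z. f z \<le> real j \<and> ipnorm ip (y - z) < \<epsilon>"
proof -
  interpret M: Metric_space UNIV "\<lambda>x y. ipnorm ip (x - y)"
    by (rule Metric_space_ipnorm)
  define E where "E j = {x. f x \<le> real j}" for j :: nat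
  have cover: "\<Union>(range (\<lambda>j. M.mtopology closure_of E j)) = UNIV"
  proof -
    have "x \<in> E (nat \<lceil>f x\<rceil>)" for x
      unfolding E_def by (simp add: real_nat_ceiling_ge)
    moreover have "E j \<subseteq> M.mtopology closure_of E j" for j
      by (rule closure_of_subset) simp
    ultimately show ?thesis by blast
  qed
  have "\<exists>j. M.mtopology interior_of (M.mtopology closure_of E j) \<noteq> {}"
  proof (rule ccontr)
    assume "\<not> ?thesis"
    then have "M.mtopology interior_of \<Union>(range (\<lambda>j. M.mtopology closure_of E j)) = {}"
      by (intro M.metric_Baire_category_alt[OF mcomplete_ipnorm]) auto
    then show False
      using cover interior_of_topspace[of M.mtopology] by simp
  qed
  then obtain j x0 where "x0 \<in> M.mtopology interior_of (M.mtopology closure_of E j)"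
    by blast
  then obtain r where r: "r > 0" "M.mball x0 r \<subseteq> M.mtopology interior_of (M.mtopology closure_of E j)"
    using openin_interior_of M.openin_mtopology by metis
  show ?thesis
  proof (rule that[OF r(1)])
    fix y \<epsilon>
    assume "ipnorm ip (x0 - y) < r" "\<epsilon> > (0::real)"
    moreover have "y \<in> M.mtopology closure_of E j"
      using r(2) interior_of_subset \<open>ipnorm ip (x0 - y) < r\<close> by fastforce
    ultimately show "\<exists>z. f z \<le> real j \<and> ipnorm ip (y - z) < \<epsilon>"
      unfolding M.metric_closure_of E_def by auto
  qed
qed

lemma clin_Baire_ball:
  fixes ipX :: "'x::cvector \<Rightarrow> 'x \<Rightarrow> complex" and ipY :: "'y::cvector \<Rightarrow> 'y \<Rightarrow> complex"
    and T :: "'x \<Rightarrow> 'y"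
  assumes X: "complex_hilbert ipX" and Y: "complex_inner ipY" and T: "clin T"
  obtains r M where "r > 0"
    "\<And>g \<epsilon>. ipnorm ipX g < r \<Longrightarrow> \<epsilon> > 0 \<Longrightarrow> \<exists>z. ipnorm ipY (T z) \<le> M \<and> ipnorm ipX (g - z) < \<epsilon>"
proof -
  interpret X: complex_hilbert ipX by fact
  interpret Y: complex_inner ipY by fact
  obtain r x0 j where r: "r > 0" and near: "\<And>y \<epsilon>. ipnorm ipX (x0 - y) < r \<Longrightarrow> \<epsilon> > 0 \<Longrightarrow>
      \<exists>z. ipnorm ipY (T z) \<le> real j \<and> ipnorm ipX (y - z) < \<epsilon>"
    by (rule X.Baire_sublevel_dense_in_ball[of "\<lambda>z. ipnorm ipY (T z)"]) blast
  have near0: "\<exists>z. ipnorm ipY (T z) \<le> 2 * real j \<and> ipnorm ipX (g - z) < \<epsilon>"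
    if g: "ipnorm ipX g < r" and \<epsilon>: "\<epsilon> > 0" for g \<epsilon>
  proof -
    \<comment> \<open>translate the ball around \<open>x0\<close> to the origin by linearity\<close>
    obtain z1 where z1: "ipnorm ipY (T z1) \<le> real j" "ipnorm ipX ((x0 + g) - z1) < \<epsilon> / 2"
      using near[of "x0 + g" "\<epsilon> / 2"] g \<epsilon> X.ipnorm_minus[of g] by auto
    obtain z2 where z2: "ipnorm ipY (T z2) \<le> real j" "ipnorm ipX (x0 - z2) < \<epsilon> / 2"
      using near[of x0 "\<epsilon> / 2"] r \<epsilon> by auto
    have "ipnorm ipY (T (z1 - z2)) \<le> ipnorm ipY (T z1) + ipnorm ipY (T z2)"
      unfolding clin_simps(5)[OF T] by (rule Y.ipnorm_diff_le)
    moreover have "ipnorm ipX (g - (z1 - z2)) \<le> ipnorm ipX ((x0 + g) - z1) + ipnorm ipX (x0 - z2)"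
      using X.ipnorm_diff_le[of "(x0 + g) - z1" "x0 - z2"] by (simp add: algebra_simps)
    ultimately show ?thesis
      using z1 z2 by (intro exI[of _ "z1 - z2"]) auto
  qed
  show ?thesis
    by (rule that[OF r near0])
qed

lemma clin_half_approximation:
  fixes ipX :: "'x::cvector \<Rightarrow> 'x \<Rightarrow> complex" and ipY :: "'y::cvector \<Rightarrow> 'y \<Rightarrow> complex"
    and T :: "'x \<Rightarrow> 'y"
  assumes X: "complex_hilbert ipX" and Y: "complex_inner ipY" and T: "clin T"
  obtains K where "K \<ge> 0"
    "\<And>g. \<exists>y. ipnorm ipX (g - y) \<le> ipnorm ipX g / 2 \<and> ipnorm ipY (T y) \<le> K * ipnorm ipX g"
proof -
  interpret X: complex_hilbert ipX by fact
  interpret Y: complex_inner ipY by fact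
  obtain r M where r: "r > 0" and near: "\<And>g \<epsilon>. ipnorm ipX g < r \<Longrightarrow> \<epsilon> > 0 \<Longrightarrow>
      \<exists>z. ipnorm ipY (T z) \<le> M \<and> ipnorm ipX (g - z) < \<epsilon>"
    by (rule clin_Baire_ball[OF X Y T]) blast
  define K where "K = 2 * max M 0 / r"
  have "\<exists>y. ipnorm ipX (g - y) \<le> ipnorm ipX g / 2 \<and> ipnorm ipY (T y) \<le> K * ipnorm ipX g" for g
  proof (cases "g = 0")
    case True
    then show ?thesis
      by (intro exI[of _ 0]) (simp add: clin_simps(3)[OF T])
  next
    case False
    then have ng: "ipnorm ipX g > 0"
      by (simp add: X.ipnorm_pos_iff)
    define s where "s = r / (2 * ipnorm ipX g)"
    have s: "s > 0"
      unfolding s_def using ng r by simp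
    have "ipnorm ipX (complex_of_real s *\<^sub>C g) = s * ipnorm ipX g"
      using s by (simp add: X.ipnorm_scaleC norm_divide)
    also have "\<dots> = r / 2"
      using ng by (simp add: s_def)
    finally obtain z where z: "ipnorm ipY (T z) \<le> M"
      "ipnorm ipX (complex_of_real s *\<^sub>C g - z) < s * ipnorm ipX g / 2"
      using near[of "complex_of_real s *\<^sub>C g" "s * ipnorm ipX g / 2"] r s ng by auto
    define y where "y = complex_of_real (1 / s) *\<^sub>C z"
    have "g - y = complex_of_real (1 / s) *\<^sub>C (complex_of_real s *\<^sub>C g - z)"
      using s by (simp add: y_def cv.scale_right_diff_distrib scaleC_scaleC scaleC_one)
    then have "s * (2 * ipnorm ipX (g - y)) = 2 * ipnorm ipX (complex_of_real s *\<^sub>C g - z)"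
      using s by (simp add: X.ipnorm_scaleC norm_divide)
    also have "\<dots> < s * ipnorm ipX g"
      using z(2) by simp
    finally have "ipnorm ipX (g - y) \<le> ipnorm ipX g / 2"
      using s by simp
    moreover have "ipnorm ipY (T y) = ipnorm ipY (T z) / s"
      using s by (simp add: y_def clin_simps(2)[OF T] Y.ipnorm_scaleC norm_divide)
    moreover have "ipnorm ipY (T z) / s \<le> max M 0 / s"
      using z(1) s by (simp add: divide_right_mono)
    moreover have "max M 0 / s = K * ipnorm ipX g"
      using r ng by (simp add: K_def s_def)
    ultimately show ?thesis
      by (intro exI[of _ y]) auto
  qed
  moreover have "K \<ge> 0"
    unfolding K_def using r by simp
  ultimately show ?thesis
    using that by blast
qed

lemma (in complex_inner) successive_approximation:
  assumes A: "\<And>g. ipnorm ip (g - A g) \<le> ipnorm ip g / 2" "\<And>g. nY (T (A g)) \<le> K * ipnorm ip g"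
    and K: "0 \<le> K"
  obtains x where "x 0 = 0" "\<And>n. ipnorm ip (x n - g) \<le> ipnorm ip g / 2 ^ n"
    "\<And>n. nY (T (x (Suc n) - x n)) \<le> K * ipnorm ip g / 2 ^ n"
proof -
  \<comment> \<open>\<open>R n\<close> is the remainder after \<open>n\<close> corrections\<close>
  define R where "R = rec_nat g (\<lambda>_ h. h - A h)"
  have R0: "R 0 = g" and RS: "R (Suc n) = R n - A (R n)" for n
    by (simp_all add: R_def)
  have R_bound: "ipnorm ip (R n) \<le> ipnorm ip g / 2 ^ n" for n
  proof (induction n)
    case 0
    then show ?case by (simp add: R0)
  next
    case (Suc n)
    have "ipnorm ip (R (Suc n)) \<le> ipnorm ip (R n) / 2"
      using A(1)[of "R n"] by (simp add: RS)
    also have "\<dots> \<le> ipnorm ip g / 2 ^ Suc n"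
      using divide_right_mono[OF Suc.IH, of 2] by simp
    finally show ?case .
  qed
  have "nY (T ((g - R (Suc n)) - (g - R n))) \<le> K * ipnorm ip g / 2 ^ n" for n
    using order_trans[OF A(2)[of "R n"] mult_left_mono[OF R_bound[of n] K]] by (simp add: RS)
  moreover have "ipnorm ip ((g - R n) - g) \<le> ipnorm ip g / 2 ^ n" for n
    using R_bound by (simp add: ipnorm_minus)
  ultimately show ?thesis
    using that[of "\<lambda>n. g - R n"] by (simp add: R0)
qed

theorem closed_graph_bounded:
  fixes ipX :: "'x::cvector \<Rightarrow> 'x \<Rightarrow> complex" and ipY :: "'y::cvector \<Rightarrow> 'y \<Rightarrow> complex"
    and T :: "'x \<Rightarrow> 'y"
  assumes X: "complex_hilbert ipX" and Y: "complex_hilbert ipY" and T: "clin T"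
    and closed: "\<And>g u x. (\<lambda>n. ipnorm ipX (x n - g)) \<longlonglongrightarrow> 0 \<Longrightarrow>
      (\<lambda>n. ipnorm ipY (T (x n) - u)) \<longlonglongrightarrow> 0 \<Longrightarrow> u = T g"
  shows "\<exists>K. \<forall>g. ipnorm ipY (T g) \<le> K * ipnorm ipX g"
proof -
  interpret X: complex_hilbert ipX by fact
  interpret Y: complex_hilbert ipY by fact
  obtain K where K: "K \<ge> 0" and
    "\<And>g. \<exists>y. ipnorm ipX (g - y) \<le> ipnorm ipX g / 2 \<and> ipnorm ipY (T y) \<le> K * ipnorm ipX g"
    using clin_half_approximation[OF X Y.complex_inner_axioms T] by blast
  then obtain A where A: "\<And>g. ipnorm ipX (g - A g) \<le> ipnorm ipX g / 2"
    "\<And>g. ipnorm ipY (T (A g)) \<le> K * ipnorm ipX g"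
    by metis
  have "ipnorm ipY (T g) \<le> 2 * K * ipnorm ipX g" for g
  proof -
    obtain x where x: "x 0 = 0" "\<And>n. ipnorm ipX (x n - g) \<le> ipnorm ipX g / 2 ^ n"
      "\<And>n. ipnorm ipY (T (x (Suc n) - x n)) \<le> K * ipnorm ipX g / 2 ^ n"
      by (rule X.successive_approximation[where nY = "ipnorm ipY" and T = T, OF A K]) blast
    then have step: "ipnorm ipY (T (x (Suc n)) - T (x n)) \<le> K * ipnorm ipX g / 2 ^ n" for n
      by (simp add: clin_simps(5)[OF T, symmetric])
    obtain u where u: "(\<lambda>n. ipnorm ipY (T (x n) - u)) \<longlonglongrightarrow> 0"
      using Y.geometric_increments_converge[OF step] by blast
    have "(\<lambda>n. ipnorm ipX (x n - g)) \<longlonglongrightarrow> 0"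
    proof (rule tendsto_sandwich[of "\<lambda>_. 0" _ _ "\<lambda>n. ipnorm ipX g / 2 ^ n"])
      show "(\<lambda>n. ipnorm ipX g / 2 ^ n) \<longlonglongrightarrow> 0"
        by (rule LIMSEQ_divide_realpow_zero) simp
    qed (simp_all add: x(2) X.ipnorm_nonneg)
    then have "u = T g"
      using closed[of x g u] u by simp
    have "ipnorm ipY (T g) \<le> 2 * K * ipnorm ipX g + ipnorm ipY (T (x n) - u)" for n
      using Y.geometric_increments_bound[OF step, of 0 n] Y.ipnorm_triangle_sub[of u "T (x n)"]
        Y.ipnorm_minus_commute[of u "T (x n)"] \<open>u = T g\<close> by (simp add: x(1) clin_simps(3)[OF T])
    moreover have "(\<lambda>n. 2 * K * ipnorm ipX g + ipnorm ipY (T (x n) - u)) \<longlonglongrightarrow> 2 * K * ipnorm ipX g"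
      using tendsto_add[OF tendsto_const u] by simp
    ultimately show ?thesis
      by (intro LIMSEQ_le_const) auto
  qed
  then show ?thesis
    by blast
qed

section \<open>Finite-dimensional Riesz representation\<close>

lemma (in vector_space) linear_inj_on_span_surj:
  assumes C: "independent C" "finite C" and f: "Vector_Spaces.linear scale scale f"
    and into: "f ` span C \<subseteq> span C" and inj: "inj_on f (span C)"
  shows "f ` span C = span C"
proof -
  interpret f: Vector_Spaces.linear scale scale f by fact
  have indep: "independent (f ` C)"
    using f.independent_injective_image[OF C(1) inj] .
  have card: "card (f ` C) = card C"
    using card_image inj_on_subset[OF inj span_superset] by blast
  have "span C \<subseteq> span (f ` C)"
  proof
    fix x
    assume x: "x \<in> span C"
    show "x \<in> span (f ` C)"
    proof (rule ccontr)
      assume nx: "x \<notin> span (f ` C)"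
      then have "x \<notin> f ` C"
        using span_base by blast
      have "independent (insert x (f ` C))"
        using independent_insertI[OF nx indep] .
      moreover have "insert x (f ` C) \<subseteq> span C"
        using x into span_superset by blast
      ultimately have "card (insert x (f ` C)) \<le> card C"
        using independent_span_bound[OF C(2)] by blast
      then show False
        using \<open>x \<notin> f ` C\<close> card C(2) by simp
    qed
  qed
  then show ?thesis
    using f.span_image into by auto
qed

lemma fd_csubspace_basis:
  assumes "fd_csubspace V"
  obtains C where "finite C" "cv.independent C" "V = cv.span C"
proof -
  obtain B where B: "finite B" "V = {(\<Sum>x\<in>B. c x *\<^sub>C x) | c. True}"
    using assms unfolding fd_csubspace_def by blast
  then have V: "V = cv.span B"
    using cv.span_finite[OF B(1)] by auto
  obtain C where C: "C \<subseteq> cv.span B" "cv.independent C" "cv.span B \<subseteq> cv.span C"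
    by (rule cv.basis_exists[of "cv.span B"])
  have "finite C"
    using cv.independent_span_bound[OF B(1) C(2) C(1)] by blast
  moreover have "V = cv.span C"
    using V C(1,3) cv.span_mono[OF C(1)] cv.span_span[of B] by blast
  ultimately show ?thesis
    using C(2) that by blast
qed

lemma fd_csubspace_subspace: "fd_csubspace V \<Longrightarrow> cv.subspace V"
  by (metis cv.subspace_span fd_csubspace_basis)

lemma cv_coefficients_unique:
  assumes "cv.independent C" "finite C" "(\<Sum>x\<in>C. c x *\<^sub>C x) = (\<Sum>x\<in>C. d x *\<^sub>C x)" "x \<in> C"
  shows "c x = d x"
proof -
  have "(\<Sum>x\<in>C. (c x - d x) *\<^sub>C x) = 0"
    using assms(3) by (simp add: cv.scale_left_diff_distrib sum_subtractf)
  then show ?thesis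
    using assms(1,2,4) unfolding cv.independent_explicit_finite_subsets by fastforce
qed

lemma cv_linear_functionals_eq_on_span:
  fixes F G :: "'a::cvector \<Rightarrow> complex"
  assumes "\<And>x y. F (x + y) = F x + F y" "\<And>c x. F (c *\<^sub>C x) = c * F x"
    and "\<And>x y. G (x + y) = G x + G y" "\<And>c x. G (c *\<^sub>C x) = c * G x"
    and "\<And>x. x \<in> C \<Longrightarrow> F x = G x" "w \<in> cv.span C"
  shows "F w = G w"
proof -
  have "F 0 = 0" "G 0 = 0"
    using assms(2)[of 0 0] assms(4)[of 0 0] by simp_all
  then have "cv.subspace {w. F w = G w}"
    unfolding cv.subspace_def using assms(1-4) by auto
  then have "cv.span C \<subseteq> {w. F w = G w}"
    using assms(5) by (intro cv.span_minimal) auto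
  then show ?thesis
    using assms(6) by blast
qed

lemma riesz_representation_fd:
  fixes \<phi> :: "'a::cvector \<Rightarrow> 'a \<Rightarrow> complex" and L :: "'a \<Rightarrow> complex"
  assumes \<phi>: "sesq \<phi>" and V: "fd_csubspace V"
    and nondeg: "\<And>v. v \<in> V \<Longrightarrow> \<forall>w\<in>V. \<phi> w v = 0 \<Longrightarrow> v = 0"
    and L: "\<And>x y. L (x + y) = L x + L y" "\<And>c x. L (c *\<^sub>C x) = c * L x"
  shows "\<exists>v\<in>V. \<forall>w\<in>V. \<phi> w v = L w"
proof -
  obtain C where C: "finite C" "cv.independent C" and V_eq: "V = cv.span C"
    using fd_csubspace_basis[OF V] by blast
  have extend: "\<phi> w v = F w" if "w \<in> V" "\<forall>x\<in>C. \<phi> x v = F x"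
    and "\<And>x y. F (x + y) = F x + F y" "\<And>c x. F (c *\<^sub>C x) = c * F x" for v w F
    using cv_linear_functionals_eq_on_span[of "\<lambda>w. \<phi> w v" F C w] that
    by (simp add: sesq_simps[OF \<phi>] V_eq)
  \<comment> \<open>\<open>S v\<close> is the vector with coordinates \<open>cnj (\<phi> x v)\<close>; it maps \<open>V\<close> injectively, hence onto \<open>V\<close>\<close>
  define S where "S v = (\<Sum>x\<in>C. cnj (\<phi> x v) *\<^sub>C x)" for v
  have S_clin: "clin S"
    by (simp add: clin_def S_def sesq_simps[OF \<phi>] scaleC_add_left sum.distrib cv.scale_sum_right scaleC_scaleC)
  have S_into: "S ` V \<subseteq> V"
    unfolding S_def V_eq by (auto intro: cv.span_sum cv.span_scale cv.span_base)
  have S_coord: "\<phi> x v = F x" if "x \<in> C" "S v = (\<Sum>x\<in>C. cnj (F x) *\<^sub>C x)" for x v F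
    using cv_coefficients_unique[OF C(2,1) that(2)[unfolded S_def] that(1)] by simp
  have "inj_on S V"
  proof (rule inj_onI)
    fix u v
    assume uv: "u \<in> V" "v \<in> V" "S u = S v"
    then have "S (u - v) = (\<Sum>x\<in>C. cnj 0 *\<^sub>C x)"
      using clin_simps(5)[OF S_clin] by simp
    then have "\<forall>w\<in>V. \<phi> w (u - v) = 0"
      using S_coord[of _ "u - v" "\<lambda>_. 0"] extend[of _ "u - v" "\<lambda>_. 0"] by simp
    then show "u = v"
      using nondeg[of "u - v"] uv cv.subspace_diff[OF fd_csubspace_subspace[OF V]] by simp
  qed
  then have "S ` V = V"
    using cv.linear_inj_on_span_surj[OF C(2,1) clin_linear[OF S_clin]] S_into by (simp add: V_eq)
  moreover have "(\<Sum>x\<in>C. cnj (L x) *\<^sub>C x) \<in> V"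
    unfolding V_eq by (auto intro: cv.span_sum cv.span_scale cv.span_base)
  ultimately obtain v where "v \<in> V" "S v = (\<Sum>x\<in>C. cnj (L x) *\<^sub>C x)"
    by (metis imageE)
  then show ?thesis
    using S_coord[of _ v L] extend[of _ v L] L by blast
qed

lemma opnorm_bdd_above:
  fixes nX :: "'x \<Rightarrow> real" and nY :: "'y \<Rightarrow> real"
  assumes "\<And>x. 0 \<le> nX x" "\<And>x. nY (T x) \<le> K * nX x"
  shows "bdd_above (range (\<lambda>x. nY (T x) / nX x))"
proof (rule bdd_aboveI2)
  fix x
  show "nY (T x) / nX x \<le> max K 0"
  proof (cases "nX x = 0")
    case False
    then have "nX x > 0"
      using assms(1)[of x] by linarith
    then have "nY (T x) / nX x \<le> K"
      using assms(2)[of x] by (simp add: pos_divide_le_eq mult.commute)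
    then show ?thesis
      by simp
  qed simp
qed

lemma norm_le_opnorm:
  assumes "\<And>x. 0 \<le> nX x" "\<And>x. nY (T x) \<le> K * nX x"
  shows "nY (T x) \<le> opnorm nX nY T * nX x"
proof (cases "nX x = 0")
  case True
  then show ?thesis
    using assms(2)[of x] by simp
next
  case False
  then have "nX x > 0"
    using assms(1)[of x] by simp
  moreover have "nY (T x) / nX x \<le> opnorm nX nY T"
    unfolding opnorm_def by (rule cSUP_upper[OF _ opnorm_bdd_above[of nX nY T K, OF assms]]) simp
  ultimately show ?thesis
    by (simp add: divide_le_eq)
qed

lemma opnorm_nonneg:
  assumes "\<And>x. 0 \<le> nX x" "\<And>y. 0 \<le> nY y" "\<And>x. nY (T x) \<le> K * nX x"
  shows "0 \<le> opnorm nX nY T"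
proof -
  have "nY (T 0) / nX 0 \<le> opnorm nX nY T"
    unfolding opnorm_def by (rule cSUP_upper[OF _ opnorm_bdd_above[of nX nY T K, OF assms(1,3)]]) simp
  moreover have "0 \<le> nY (T 0) / nX 0"
    using assms(1,2) by simp
  ultimately show ?thesis
    by linarith
qed

lemma bdd_op_nonneg_bound:
  assumes "bdd_op nX nY T" "\<And>x. 0 \<le> nX x"
  obtains C where "C \<ge> 0" "\<And>x. nY (T x) \<le> C * nX x"
proof -
  obtain C where C: "\<And>x. nY (T x) \<le> C * nX x"
    using assms(1) unfolding bdd_op_def by blast
  have "nY (T x) \<le> max C 0 * nX x" for x
    using C[of x] mult_right_mono[OF max.cobounded1 assms(2)] by (meson order_trans)
  then show ?thesis
    using that[of "max C 0"] by simp
qed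

context complex_inner
begin

lemma orth_proj_unique:
  assumes V: "fd_csubspace V"
  shows "\<exists>!w. w \<in> V \<and> (\<forall>s\<in>V. ip (u - w) s = 0)"
proof -
  have "v = 0" if "v \<in> V" "\<forall>w\<in>V. ip w v = 0" for v
    using that ip_self_pos[of v] by force
  then have "\<exists>w\<in>V. \<forall>s\<in>V. ip s w = ip s u"
    by (rule riesz_representation_fd[OF sesq_ip V]) (simp_all add: ip_simps)
  then obtain w where w: "w \<in> V" "\<And>s. s \<in> V \<Longrightarrow> ip s w = ip s u"
    by blast
  have "ip (u - w) s = 0" if "s \<in> V" for s
    using w(2)[OF that] ip_commute[of s "u - w"] by (simp add: ip_simps)
  moreover have "w' = w" if "w' \<in> V" "\<forall>s\<in>V. ip (u - w') s = 0" for w'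
  proof -
    have "w - w' \<in> V"
      using w(1) that(1) cv.subspace_diff[OF fd_csubspace_subspace[OF V]] by blast
    then have "ip (w - w') (w - w') = ip (u - w') (w - w') - ip (u - w) (w - w')"
      by (simp add: ip_simps)
    also have "\<dots> = 0"
      using that(2) \<open>w - w' \<in> V\<close> \<open>\<And>s. s \<in> V \<Longrightarrow> ip (u - w) s = 0\<close> by simp
    finally show ?thesis
      using ip_self_pos[of "w - w'"] by (cases "w - w' = 0") auto
  qed
  ultimately show ?thesis
    using w(1) by blast
qed

lemma orth_proj:
  assumes "fd_csubspace V"
  shows "orth_proj ip V u \<in> V" "\<And>s. s \<in> V \<Longrightarrow> ip (u - orth_proj ip V u) s = 0"
  using theI'[OF orth_proj_unique[OF assms, of u]] unfolding orth_proj_def by auto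

lemma orth_proj_id:
  assumes "fd_csubspace V" "v \<in> V"
  shows "orth_proj ip V v = v"
  unfolding orth_proj_def
  by (rule the1_equality[OF orth_proj_unique[OF assms(1)]]) (simp add: ip_simps assms(2))

lemma ipnorm_diff_orth_proj_le:
  assumes "fd_csubspace V"
  shows "ipnorm ip (u - orth_proj ip V u) \<le> ipnorm ip u"
proof -
  define p where "p = orth_proj ip V u"
  define e where "e = u - p"
  have "ip e p = 0"
    unfolding e_def p_def using orth_proj[OF assms] by blast
  moreover have "u = e + p"
    by (simp add: e_def)
  ultimately have "ip u u = ip e e + ip p p"
    using ip_commute[of e p] by (simp add: ip_simps)
  then have "(ipnorm ip e)\<^sup>2 \<le> (ipnorm ip u)\<^sup>2"
    using ip_self_nonneg[of p] by (simp add: ipnorm_power2)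
  then show ?thesis
    unfolding e_def p_def by (meson ipnorm_nonneg power2_le_imp_le)
qed

end

section \<open>The solution operator of an invertible Garding form\<close>

lemma (in complex_inner) ip_bdd_op_bound:
  assumes "bdd_op (ipnorm ip) (ipnorm ip) T"
  shows "\<exists>C\<ge>0. \<forall>x y. cmod (ip (T x) y) \<le> C * ipnorm ip x * ipnorm ip y"
proof -
  obtain C where C: "C \<ge> 0" "\<And>x. ipnorm ip (T x) \<le> C * ipnorm ip x"
    using bdd_op_nonneg_bound[OF assms ipnorm_nonneg] by blast
  have "cmod (ip (T x) y) \<le> C * ipnorm ip x * ipnorm ip y" for x y
    using cauchy_schwarz[of "T x" y] mult_right_mono[OF C(2) ipnorm_nonneg] by (rule order_trans)
  then show ?thesis
    using C(1) by blast
qed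

locale invertible_garding_form =
  fixes ipH :: "'h::cvector \<Rightarrow> 'h \<Rightarrow> complex" and ip0 :: "'g::cvector \<Rightarrow> 'g \<Rightarrow> complex"
    and J D :: "'h \<Rightarrow> 'g" and b a :: "'h \<Rightarrow> 'h \<Rightarrow> complex" and minv epsop :: "'g \<Rightarrow> 'g"
    and CG1 CG2 :: real
  assumes standing: "standing_assms ipH ip0 J D b minv epsop a CG1 CG2"
    and invertible: "form_invertible ipH a"
begin

sublocale H: complex_hilbert ipH
  using standing unfolding standing_assms_def complex_hilbert_def by blast

sublocale H0: complex_hilbert ip0
  using standing unfolding standing_assms_def complex_hilbert_def by blast

abbreviation "inv_op \<equiv> Ainv ip0 J a"
abbreviation "inv_norm \<equiv> Ainv_norm ipH ip0 J a"

lemma clin_J: "clin J" and clin_D: "clin D"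
  and norm_J_le: "ipnorm ip0 (J v) \<le> ipnorm ipH v" and norm_D_le: "ipnorm ip0 (D v) \<le> ipnorm ipH v"
  and CG1_pos: "CG1 > 0" and CG2_pos: "CG2 > 0"
  and a_eq: "a u v = ip0 (minv (D u)) (D v) + b u v - ip0 (epsop (J u)) (J v)"
  and garding: "CG1 * (ipnorm ipH v)\<^sup>2 \<le> cmod (a v v + complex_of_real (CG2 * (ipnorm ip0 (J v))\<^sup>2))"
  using standing unfolding standing_assms_def by blast+

lemma sesq_a: "sesq a"
proof -
  have "sesq b" "clin minv" "clin epsop"
    using standing unfolding standing_assms_def bdd_sesq_def bdd_op_def by blast+
  then show ?thesis
    unfolding sesq_def a_eq
    by (simp add: clin_simps clin_J clin_D sesq_simps H0.sesq_ip algebra_simps)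
qed

lemmas a_simps = sesq_simps[OF sesq_a]

lemma a_bounded: "\<exists>M. \<forall>u v. cmod (a u v) \<le> M * ipnorm ipH u * ipnorm ipH v"
proof -
  have "bdd_op (ipnorm ip0) (ipnorm ip0) minv" "bdd_op (ipnorm ip0) (ipnorm ip0) epsop"
    using standing unfolding standing_assms_def by blast+
  then obtain Cm Ce where
    Cm: "Cm \<ge> 0" "\<And>x y. cmod (ip0 (minv x) y) \<le> Cm * ipnorm ip0 x * ipnorm ip0 y" and
    Ce: "Ce \<ge> 0" "\<And>x y. cmod (ip0 (epsop x) y) \<le> Ce * ipnorm ip0 x * ipnorm ip0 y"
    using H0.ip_bdd_op_bound by meson
  have "bdd_sesq (ipnorm ipH) b"
    using standing unfolding standing_assms_def by blast
  then obtain Cb where Cb: "\<And>u v. cmod (b u v) \<le> Cb * ipnorm ipH u * ipnorm ipH v"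
    unfolding bdd_sesq_def by blast
  have E: "C * ipnorm ip0 (E u) * ipnorm ip0 (E v) \<le> C * ipnorm ipH u * ipnorm ipH v"
    if "C \<ge> 0" "\<And>w. ipnorm ip0 (E w) \<le> ipnorm ipH w" for C E u v
    by (intro mult_mono mult_left_mono) (simp_all add: that H.ipnorm_nonneg H0.ipnorm_nonneg)
  have "cmod (a u v) \<le> (Cm + Cb + Ce) * ipnorm ipH u * ipnorm ipH v" for u v
  proof -
    have "cmod (a u v) \<le> cmod (ip0 (minv (D u)) (D v)) + cmod (b u v) + cmod (ip0 (epsop (J u)) (J v))"
      unfolding a_eq using norm_triangle_ineq4[of "ip0 (minv (D u)) (D v) + b u v" "ip0 (epsop (J u)) (J v)"]
        norm_triangle_ineq[of "ip0 (minv (D u)) (D v)" "b u v"] by linarith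
    also have "\<dots> \<le> Cm * ipnorm ipH u * ipnorm ipH v + Cb * ipnorm ipH u * ipnorm ipH v
        + Ce * ipnorm ipH u * ipnorm ipH v"
      using Cm(2)[of "D u" "D v"] Ce(2)[of "J u" "J v"] Cb[of u v]
        E[OF Cm(1) norm_D_le, of u v] E[OF Ce(1) norm_J_le, of u v] by linarith
    finally show ?thesis
      by (simp add: algebra_simps)
  qed
  then show ?thesis
    by blast
qed

lemma Ainv_unique_ex: "\<exists>!u. \<forall>v. a u v = ip0 f (J v)"
proof -
  have "dual_elem (ipnorm ipH) (\<lambda>v. ip0 f (J v))"
    unfolding dual_elem_def antilin_def
  proof (intro conjI allI exI)
    show "ip0 f (J (x + y)) = ip0 f (J x) + ip0 f (J y)" "ip0 f (J (c *\<^sub>C x)) = cnj c * ip0 f (J x)"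
      for x y c
      by (simp_all add: clin_simps[OF clin_J] H0.ip_simps)
    show "cmod (ip0 f (J v)) \<le> ipnorm ip0 f * ipnorm ipH v" for v
      using H0.cauchy_schwarz[of f "J v"] mult_left_mono[OF norm_J_le H0.ipnorm_nonneg]
      by (meson order_trans)
  qed
  then show ?thesis
    using invertible unfolding form_invertible_def by blast
qed

lemma Ainv_eq: "a (inv_op f) v = ip0 f (J v)"
  using theI'[OF Ainv_unique_ex[of f]] unfolding Ainv_def by blast

lemma Ainv_unique: "(\<And>v. a u v = ip0 f (J v)) \<Longrightarrow> inv_op f = u"
  using Ainv_unique_ex[of f] Ainv_eq[of f] by blast

lemma clin_Ainv: "clin inv_op"
  unfolding clin_def
proof (intro conjI allI)
  show "inv_op (x + y) = inv_op x + inv_op y" for x y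
    by (rule Ainv_unique) (simp add: a_simps H0.ip_simps Ainv_eq)
  show "inv_op (c *\<^sub>C x) = c *\<^sub>C inv_op x" for c x
    by (rule Ainv_unique) (simp add: a_simps H0.ip_simps Ainv_eq)
qed

lemma Ainv_bounded: "\<exists>K. \<forall>f. ipnorm ipH (inv_op f) \<le> K * ipnorm ip0 f"
proof (rule closed_graph_bounded[OF H0.complex_hilbert_axioms H.complex_hilbert_axioms clin_Ainv])
  fix g u and x :: "nat \<Rightarrow> 'g"
  assume x: "(\<lambda>n. ipnorm ip0 (x n - g)) \<longlonglongrightarrow> 0" and u: "(\<lambda>n. ipnorm ipH (inv_op (x n) - u)) \<longlonglongrightarrow> 0"
  obtain M where M: "\<And>u v. cmod (a u v) \<le> M * ipnorm ipH u * ipnorm ipH v"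
    using a_bounded by blast
  show "u = inv_op g"
  proof (rule Ainv_unique[symmetric])
    fix v
    \<comment> \<open>the graph is closed because \<open>a\<close> is bounded\<close>
    have bound: "cmod (a u v - ip0 g (J v))
        \<le> M * ipnorm ipH (inv_op (x n) - u) * ipnorm ipH v + ipnorm ip0 (x n - g) * ipnorm ipH v" for n
    proof -
      have "a u v - ip0 g (J v) = ip0 (x n - g) (J v) - a (inv_op (x n) - u) v"
        using Ainv_eq[of "x n" v] by (simp add: a_simps H0.ip_simps)
      then have "cmod (a u v - ip0 g (J v)) \<le> cmod (ip0 (x n - g) (J v)) + cmod (a (inv_op (x n) - u) v)"
        by (metis norm_triangle_ineq4)
      moreover have "cmod (ip0 (x n - g) (J v)) \<le> ipnorm ip0 (x n - g) * ipnorm ipH v"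
        using H0.cauchy_schwarz[of "x n - g" "J v"] mult_left_mono[OF norm_J_le H0.ipnorm_nonneg]
        by (meson order_trans)
      ultimately show ?thesis
        using M[of "inv_op (x n) - u" v] by linarith
    qed
    have "(\<lambda>n. M * ipnorm ipH (inv_op (x n) - u) * ipnorm ipH v + ipnorm ip0 (x n - g) * ipnorm ipH v)
        \<longlonglongrightarrow> M * 0 * ipnorm ipH v + 0 * ipnorm ipH v"
      by (intro tendsto_intros x u)
    then have "cmod (a u v - ip0 g (J v)) \<le> 0"
      using bound by (intro LIMSEQ_le_const) auto
    then show "a u v = ip0 g (J v)"
      by simp
  qed
qed

lemma norm_Ainv_le: "ipnorm ipH (inv_op f) \<le> inv_norm * ipnorm ip0 f"
  and Ainv_norm_nonneg: "0 \<le> inv_norm"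
proof -
  obtain K where K: "\<And>f. ipnorm ipH (inv_op f) \<le> K * ipnorm ip0 f"
    using Ainv_bounded by blast
  show "ipnorm ipH (inv_op f) \<le> inv_norm * ipnorm ip0 f"
    unfolding Ainv_norm_def
    by (rule norm_le_opnorm[where nX = "ipnorm ip0" and nY = "ipnorm ipH" and T = inv_op,
          OF H0.ipnorm_nonneg K])
  show "0 \<le> inv_norm"
    unfolding Ainv_norm_def
    by (rule opnorm_nonneg[where nX = "ipnorm ip0" and nY = "ipnorm ipH" and T = inv_op,
          OF H0.ipnorm_nonneg H.ipnorm_nonneg K])
qed

lemma Ainv_proj_bound:
  assumes "\<And>x. ipnorm ipH (x - P x) \<le> ipnorm ipH x"
  shows "ipnorm ipH (inv_op f - P (inv_op f))
      \<le> opnorm (ipnorm ip0) (ipnorm ipH) (\<lambda>f. inv_op f - P (inv_op f)) * ipnorm ip0 f"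
    and "0 \<le> opnorm (ipnorm ip0) (ipnorm ipH) (\<lambda>f. inv_op f - P (inv_op f))"
proof -
  obtain K where "\<And>f. ipnorm ipH (inv_op f) \<le> K * ipnorm ip0 f"
    using Ainv_bounded by blast
  then have K: "ipnorm ipH (inv_op f - P (inv_op f)) \<le> K * ipnorm ip0 f" for f
    using assms order_trans by blast
  show "ipnorm ipH (inv_op f - P (inv_op f))
      \<le> opnorm (ipnorm ip0) (ipnorm ipH) (\<lambda>f. inv_op f - P (inv_op f)) * ipnorm ip0 f"
    by (rule norm_le_opnorm[where nX = "ipnorm ip0" and nY = "ipnorm ipH"
          and T = "\<lambda>f. inv_op f - P (inv_op f)", OF H0.ipnorm_nonneg K])
  show "0 \<le> opnorm (ipnorm ip0) (ipnorm ipH) (\<lambda>f. inv_op f - P (inv_op f))"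
    by (rule opnorm_nonneg[where nX = "ipnorm ip0" and nY = "ipnorm ipH"
          and T = "\<lambda>f. inv_op f - P (inv_op f)", OF H0.ipnorm_nonneg H.ipnorm_nonneg K])
qed

end

section \<open>Inf-sup stability of quasi-optimal Galerkin approximations\<close>

locale galerkin_quasi_optimal = invertible_garding_form +
  fixes V and Q A :: real
  assumes fd_V: "fd_csubspace V"
    and Q_nonneg: "0 \<le> Q"
    and quasi_optimal: "\<And>u uh. uh \<in> V \<Longrightarrow> \<forall>vh\<in>V. a (u - uh) vh = 0 \<Longrightarrow>
      ipnorm ipH (u - uh) \<le> Q * ipnorm ipH (u - orth_proj ipH V u)"
    and adjoint_approximation: "opnorm (ipnorm ip0) (ipnorm ipH)
      (\<lambda>f. Ainv ip0 J a f - orth_proj ipH V (Ainv ip0 J a f)) \<le> A"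
begin

lemma galerkin_nondegenerate:
  assumes "v \<in> V" "\<forall>w\<in>V. a v w = 0"
  shows "v = 0"
proof -
  have "0 \<in> V"
    using cv.subspace_0[OF fd_csubspace_subspace[OF fd_V]] .
  then have "ipnorm ipH v \<le> Q * ipnorm ipH (v - orth_proj ipH V v)"
    using quasi_optimal[of 0 v] assms(2) by simp
  then show ?thesis
    using H.orth_proj_id[OF fd_V assms(1)] H.ipnorm_eq_0_iff H.ipnorm_nonneg[of v] by simp
qed

lemma galerkin_solution_exists: "\<exists>uh\<in>V. \<forall>w\<in>V. a (u - uh) w = 0"
proof -
  have "sesq (\<lambda>w v. cnj (a v w))"
    unfolding sesq_def by (simp add: a_simps)
  then have "\<exists>uh\<in>V. \<forall>w\<in>V. cnj (a uh w) = cnj (a u w)"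
    by (rule riesz_representation_fd[OF _ fd_V]) (simp_all add: a_simps galerkin_nondegenerate)
  then obtain uh where "uh \<in> V" "\<forall>w\<in>V. a uh w = a u w"
    by auto
  then show ?thesis
    by (metis a_simps(9) diff_self)
qed

lemma A_nonneg: "0 \<le> A"
  using Ainv_proj_bound(2)[OF H.ipnorm_diff_orth_proj_le[OF fd_V]] adjoint_approximation by linarith

lemma stability_constant_nonneg: "0 \<le> inv_norm + Q * A"
  using Ainv_norm_nonneg Q_nonneg A_nonneg by simp

lemma galerkin_Ainv_bound:
  "\<exists>\<xi>h\<in>V. (\<forall>w\<in>V. a \<xi>h w = ip0 f (J w)) \<and> ipnorm ipH \<xi>h \<le> (inv_norm + Q * A) * ipnorm ip0 f"
proof -
  define \<xi> where "\<xi> = inv_op f"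
  obtain \<xi>h where \<xi>h: "\<xi>h \<in> V" "\<forall>w\<in>V. a (\<xi> - \<xi>h) w = 0"
    using galerkin_solution_exists by blast
  have "ipnorm ipH (\<xi> - \<xi>h) \<le> Q * ipnorm ipH (\<xi> - orth_proj ipH V \<xi>)"
    using quasi_optimal \<xi>h by blast
  also have "\<dots> \<le> Q * (A * ipnorm ip0 f)"
    using Ainv_proj_bound(1)[OF H.ipnorm_diff_orth_proj_le[OF fd_V], of f] adjoint_approximation
      mult_right_mono[OF adjoint_approximation H0.ipnorm_nonneg[of f]] Q_nonneg
    by (auto simp: \<xi>_def intro!: mult_left_mono)
  finally have "ipnorm ipH \<xi>h \<le> inv_norm * ipnorm ip0 f + Q * A * ipnorm ip0 f"
    using H.ipnorm_triangle_sub[of \<xi>h \<xi>] H.ipnorm_minus_commute[of \<xi>h \<xi>] norm_Ainv_le[of f]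
    by (simp add: \<xi>_def)
  moreover have "a \<xi>h w = ip0 f (J w)" if "w \<in> V" for w
    using \<xi>h(2) that Ainv_eq[of f w] by (simp add: \<xi>_def a_simps)
  ultimately show ?thesis
    using \<xi>h(1) by (auto simp: algebra_simps)
qed

lemma adjoint_inf_sup:
  assumes v: "v \<in> V" and \<beta>: "0 \<le> \<beta>" "\<And>w. w \<in> V \<Longrightarrow> cmod (a w v) \<le> \<beta> * ipnorm ipH w"
  shows "CG1 * ipnorm ipH v \<le> \<beta> * (1 + CG2 * (inv_norm + Q * A))"
proof -
  define G where "G = inv_norm + Q * A"
  have G: "0 \<le> G"
    unfolding G_def by (rule stability_constant_nonneg)
  obtain \<xi>h where \<xi>h: "\<xi>h \<in> V" "a \<xi>h v = ip0 (J v) (J v)" "ipnorm ipH \<xi>h \<le> G * ipnorm ip0 (J v)"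
    using galerkin_Ainv_bound[of "J v"] v unfolding G_def by blast
  \<comment> \<open>testing the adjoint problem with \<open>v\<close> controls the \<open>H0\<close>-part of the Garding inequality\<close>
  have "(ipnorm ip0 (J v))\<^sup>2 = cmod (a \<xi>h v)"
    using \<xi>h(2) H0.ip_self_eq[of "J v"] by (simp add: norm_power)
  also have "\<dots> \<le> \<beta> * (G * ipnorm ip0 (J v))"
    using \<beta>(2)[OF \<xi>h(1)] mult_left_mono[OF \<xi>h(3) \<beta>(1)] by linarith
  also have "\<dots> \<le> \<beta> * (G * ipnorm ipH v)"
    using \<beta>(1) G norm_J_le[of v] by (intro mult_left_mono) auto
  finally have J: "(ipnorm ip0 (J v))\<^sup>2 \<le> \<beta> * G * ipnorm ipH v"
    by simp
  have "cmod (complex_of_real (CG2 * (ipnorm ip0 (J v))\<^sup>2)) = CG2 * (ipnorm ip0 (J v))\<^sup>2"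
    using CG2_pos by (simp only: norm_of_real) simp
  then have "CG1 * (ipnorm ipH v)\<^sup>2 \<le> cmod (a v v) + CG2 * (ipnorm ip0 (J v))\<^sup>2"
    using garding[of v] norm_triangle_ineq[of "a v v" "complex_of_real (CG2 * (ipnorm ip0 (J v))\<^sup>2)"]
    by linarith
  also have "\<dots> \<le> \<beta> * ipnorm ipH v + CG2 * (\<beta> * G * ipnorm ipH v)"
    using \<beta>(2)[OF v] J CG2_pos by (intro add_mono mult_left_mono) auto
  finally have "CG1 * ipnorm ipH v * ipnorm ipH v \<le> \<beta> * (1 + CG2 * G) * ipnorm ipH v"
    by (simp add: power2_eq_square algebra_simps)
  then show ?thesis
    using \<beta>(1) CG2_pos G H.ipnorm_nonneg[of v] unfolding G_def[symmetric]
    by (cases "ipnorm ipH v = 0") auto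
qed

lemma adjoint_nondegenerate:
  assumes "v \<in> V" "\<forall>w\<in>V. a w v = 0"
  shows "v = 0"
  using adjoint_inf_sup[of v 0] assms CG1_pos H.ipnorm_eq_0_iff H.ipnorm_nonneg[of v]
  by (simp add: mult_le_0_iff)

lemma adjoint_representative: "\<exists>v\<in>V. \<forall>w\<in>V. a w v = ipH w u"
  by (rule riesz_representation_fd[OF sesq_a fd_V]) (simp_all add: adjoint_nondegenerate H.ip_simps)

theorem inf_sup_lower_bound:
  assumes G: "inv_norm + Q * A \<le> G"
  shows "ereal (1 / (inverse CG1 * (1 + CG2 * G)))
    \<le> (INF uh\<in>V - {0}. SUP vh\<in>V - {0}. ereal (cmod (a uh vh) / (ipnorm ipH uh * ipnorm ipH vh)))"
proof (rule INF_greatest)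
  fix u
  assume u: "u \<in> V - {0}"
  obtain v where v: "v \<in> V" "\<And>w. w \<in> V \<Longrightarrow> a w v = ipH w u"
    using adjoint_representative by blast
  have "0 \<le> G"
    using G stability_constant_nonneg by linarith
  then have K: "1 + CG2 * G > 0"
    using CG2_pos by (simp add: add_pos_nonneg)
  have "cmod (a w v) \<le> ipnorm ipH u * ipnorm ipH w" if "w \<in> V" for w
    using v(2)[OF that] H.cauchy_schwarz[of w u] by (simp add: mult.commute)
  then have "CG1 * ipnorm ipH v \<le> ipnorm ipH u * (1 + CG2 * (inv_norm + Q * A))"
    by (rule adjoint_inf_sup[OF v(1) H.ipnorm_nonneg])
  also have "\<dots> \<le> ipnorm ipH u * (1 + CG2 * G)"
    using G CG2_pos H.ipnorm_nonneg[of u] by (intro mult_left_mono) auto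
  finally have kv: "CG1 * ipnorm ipH v \<le> ipnorm ipH u * (1 + CG2 * G)" .
  have au: "cmod (a u v) = (ipnorm ipH u)\<^sup>2"
    using v(2) u H.ip_self_eq[of u] by (simp add: norm_power)
  have "v \<noteq> 0"
  proof
    assume "v = 0"
    then have "ipnorm ipH u = 0"
      using au by (simp add: a_simps)
    then show False
      using u by (simp add: H.ipnorm_eq_0_iff)
  qed
  then have pos: "ipnorm ipH v > 0" "ipnorm ipH u > 0"
    using u by (simp_all add: H.ipnorm_pos_iff)
  have "1 / (inverse CG1 * (1 + CG2 * G)) = CG1 / (1 + CG2 * G)"
    by (simp add: field_simps)
  also have "\<dots> \<le> ipnorm ipH u / ipnorm ipH v"
    using kv K pos by (simp add: divide_le_eq le_divide_eq mult.commute)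
  also have "\<dots> = cmod (a u v) / (ipnorm ipH u * ipnorm ipH v)"
    using au pos by (simp add: power2_eq_square)
  finally show "ereal (1 / (inverse CG1 * (1 + CG2 * G)))
      \<le> (SUP vh\<in>V - {0}. ereal (cmod (a u vh) / (ipnorm ipH u * ipnorm ipH vh)))"
    using v(1) \<open>v \<noteq> 0\<close> by (intro SUP_upper2[of v]) auto
qed

end

section \<open>The resolution condition\<close>

lemma resolution_condition_bound:
  fixes c \<epsilon> :: real and p :: nat
  assumes c: "0 < c" and \<epsilon>: "0 < \<epsilon>" and p: "1 \<le> p"
  shows "\<exists>C4>0. \<forall>N x. c \<le> N \<longrightarrow> 0 < x \<longrightarrow> x ^ (2 * p) * N \<le> \<epsilon> \<longrightarrow>
           (1 + x ^ p * N) * (x + x ^ p * N) \<le> C4 * N"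
proof -
  define m where "m = max 1 (\<epsilon> / c)"
  define q where "q = (\<epsilon> / c + 1) / 2"
  have m: "1 \<le> m" "\<epsilon> / c \<le> m" and q: "0 < q"
    using c \<epsilon> by (simp_all add: m_def q_def add_pos_pos)
  have "(1 + x ^ p * N) * (x + x ^ p * N) \<le> (m / c + q + m * q + \<epsilon>) * N"
    if N: "c \<le> N" and x: "0 < x" and small: "x ^ (2 * p) * N \<le> \<epsilon>" for N x
  proof -
    define t where "t = x ^ p * N"
    have N0: "0 < N" and t0: "0 \<le> t"
      using c N x by (simp_all add: t_def)
    have x_le_m: "x \<le> m"
    proof (cases "x \<le> 1")
      case False
      have "x = x ^ 1"
        by simp
      also have "\<dots> \<le> x ^ (2 * p)"
        using False p by (intro power_increasing) auto
      also have "\<dots> \<le> \<epsilon> / N"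
        using small N0 by (simp add: le_divide_eq)
      also have "\<dots> \<le> \<epsilon> / c"
        using N c \<epsilon> by (intro divide_left_mono) auto
      finally show ?thesis
        using m by simp
    qed (use m in simp)
    have "m \<le> m / c * N"
      using mult_left_mono[OF N, of m] m c by (simp add: field_simps)
    then have x_le: "x \<le> m / c * N"
      using x_le_m by simp
    have t2: "t\<^sup>2 \<le> \<epsilon> * N"
    proof -
      have "t\<^sup>2 = x ^ (2 * p) * N * N"
        by (simp add: t_def power_mult_distrib power_mult power2_eq_square)
      then show ?thesis
        using mult_right_mono[OF small, of N] N0 by simp
    qed
    \<comment> \<open>\<open>2 t N \<le> t\<^sup>2 + N\<^sup>2 \<le> (\<epsilon> + N) N\<close>\<close>
    have t_le: "t \<le> q * N"
    proof -
      have "2 * t * N \<le> (\<epsilon> + N) * N"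
        using sum_squares_bound[of t N] t2 by (simp add: power2_eq_square algebra_simps)
      then have "2 * t \<le> \<epsilon> + N"
        using N0 by simp
      moreover have "\<epsilon> \<le> \<epsilon> / c * N"
        using mult_left_mono[OF N, of \<epsilon>] c \<epsilon> by (simp add: field_simps)
      ultimately show ?thesis
        unfolding q_def by (simp add: field_simps)
    qed
    have xt: "x * t \<le> m * (q * N)"
      using mult_mono[OF x_le_m t_le] m t0 by simp
    have "(1 + t) * (x + t) = x + t + x * t + t\<^sup>2"
      by (simp add: power2_eq_square algebra_simps)
    also have "\<dots> \<le> m / c * N + q * N + m * (q * N) + \<epsilon> * N"
      using x_le t_le xt t2 by linarith
    also have "\<dots> = (m / c + q + m * q + \<epsilon>) * N"
      by (simp add: algebra_simps)
    finally show ?thesis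
      unfolding t_def .
  qed
  moreover have "0 < m / c + q + m * q + \<epsilon>"
    using m q c \<epsilon> by (simp add: add_pos_pos)
  ultimately show ?thesis
    by blast
qed

theorem corollary4p10:
  fixes ipH :: "real \<Rightarrow> 'h::cvector \<Rightarrow> 'h \<Rightarrow> complex"
    and ip0 :: "real \<Rightarrow> 'g::cvector \<Rightarrow> 'g \<Rightarrow> complex"
    and J D :: "real \<Rightarrow> 'h \<Rightarrow> 'g"
    and b a :: "real \<Rightarrow> 'h \<Rightarrow> 'h \<Rightarrow> complex"
    and minv epsop :: "real \<Rightarrow> 'g \<Rightarrow> 'g"
    and CG1 CG2 :: "real \<Rightarrow> real"
    and p :: nat
    and Vh :: "real \<Rightarrow> 'h set"
    and C1 C2 C3 :: real
  assumes std: "\<forall>k>0. standing_assms (ipH k) (ip0 k) (J k) (D k) (b k) (minv k) (epsop k) (a k) (CG1 k) (CG2 k)"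
    and inv: "\<forall>k>0. form_invertible (ipH k) (a k)"
    and lower: "\<forall>k0>0. \<exists>c>0. \<forall>k\<ge>k0. c \<le> Ainv_norm (ipH k) (ip0 k) (J k) (a k)"
    and p: "p \<ge> 1"
    and Vh: "\<forall>h>0. fd_csubspace (Vh h)"
    and C: "C1 > 0" "C2 > 0" "C3 > 0"
    and qo: "\<forall>k>0. \<forall>h>0. (k * h) ^ (2 * p) * Ainv_norm (ipH k) (ip0 k) (J k) (a k) \<le> C1 \<longrightarrow>
               (\<forall>u uh. uh \<in> Vh h \<and> (\<forall>vh\<in>Vh h. a k (u - uh) vh = 0) \<longrightarrow>
                  ipnorm (ipH k) (u - uh) \<le> C2 * (1 + (k * h) ^ p * Ainv_norm (ipH k) (ip0 k) (J k) (a k))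
                     * ipnorm (ipH k) (u - orth_proj (ipH k) (Vh h) u))"
    and adj: "\<forall>k>0. \<forall>h>0. (k * h) ^ (2 * p) * Ainv_norm (ipH k) (ip0 k) (J k) (a k) \<le> C1 \<longrightarrow>
               opnorm (ipnorm (ip0 k)) (ipnorm (ipH k))
                 (\<lambda>f. Ainv (ip0 k) (J k) (a k) f - orth_proj (ipH k) (Vh h) (Ainv (ip0 k) (J k) (a k) f))
               \<le> C3 * (k * h + (k * h) ^ p * Ainv_norm (ipH k) (ip0 k) (J k) (a k))"
  shows "\<forall>k0>0. \<forall>\<epsilon>. 0 < \<epsilon> \<and> \<epsilon> \<le> C1 \<longrightarrow>
           (\<exists>C4>0. \<forall>k\<ge>k0. \<forall>h>0.
              (k * h) ^ (2 * p) * Ainv_norm (ipH k) (ip0 k) (J k) (a k) \<le> \<epsilon> \<longrightarrow>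
              ereal (1 / (inverse (CG1 k) * (1 + CG2 k * (1 + C2 * C3 * C4) * Ainv_norm (ipH k) (ip0 k) (J k) (a k))))
              \<le> (INF uh\<in>Vh h - {0}. SUP vh\<in>Vh h - {0}.
                    ereal (cmod (a k uh vh) / (ipnorm (ipH k) uh * ipnorm (ipH k) vh))))"
proof (intro allI impI)
  fix k0 \<epsilon> :: real
  assume k0: "k0 > 0" and \<epsilon>: "0 < \<epsilon> \<and> \<epsilon> \<le> C1"
  obtain c where c: "c > 0" "\<And>k. k0 \<le> k \<Longrightarrow> c \<le> Ainv_norm (ipH k) (ip0 k) (J k) (a k)"
    using lower k0 by blast
  obtain C4 where C4: "C4 > 0" and bound: "\<And>N x. c \<le> N \<Longrightarrow> 0 < x \<Longrightarrow> x ^ (2 * p) * N \<le> \<epsilon> \<Longrightarrow>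
      (1 + x ^ p * N) * (x + x ^ p * N) \<le> C4 * N"
    using resolution_condition_bound[OF c(1) _ p] \<epsilon> by blast
  have "ereal (1 / (inverse (CG1 k) * (1 + CG2 k * ((1 + C2 * C3 * C4) * Ainv_norm (ipH k) (ip0 k) (J k) (a k)))))
      \<le> (INF uh\<in>Vh h - {0}. SUP vh\<in>Vh h - {0}.
            ereal (cmod (a k uh vh) / (ipnorm (ipH k) uh * ipnorm (ipH k) vh)))"
    if k: "k0 \<le> k" and h: "0 < h" and small: "(k * h) ^ (2 * p) * Ainv_norm (ipH k) (ip0 k) (J k) (a k) \<le> \<epsilon>"
    for k h
  proof -
    let ?N = "Ainv_norm (ipH k) (ip0 k) (J k) (a k)"
    let ?Q = "C2 * (1 + (k * h) ^ p * ?N)" and ?A = "C3 * (k * h + (k * h) ^ p * ?N)"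
    have "k > 0" "c \<le> ?N" "0 < k * h" and resolved: "(k * h) ^ (2 * p) * ?N \<le> C1"
      using k k0 c h small \<epsilon> by auto
    then have "0 \<le> ?Q"
      using C c(1) by simp
    interpret galerkin_quasi_optimal "ipH k" "ip0 k" "J k" "D k" "b k" "a k" "minv k" "epsop k"
      "CG1 k" "CG2 k" "Vh h" ?Q ?A
      by (unfold_locales; insert std[rule_format, OF \<open>k > 0\<close>] inv[rule_format, OF \<open>k > 0\<close>]
          Vh[rule_format, OF h] \<open>0 \<le> ?Q\<close> qo[rule_format, OF \<open>k > 0\<close> h resolved]
          adj[rule_format, OF \<open>k > 0\<close> h resolved]; blast)
    have "?N + ?Q * ?A \<le> (1 + C2 * C3 * C4) * ?N"
      using mult_left_mono[OF bound[OF \<open>c \<le> ?N\<close> \<open>0 < k * h\<close> small], of "C2 * C3"] C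
      by (simp add: algebra_simps)
    then show ?thesis
      by (rule inf_sup_lower_bound)
  qed
  then show "\<exists>C4>0. \<forall>k\<ge>k0. \<forall>h>0.
          (k * h) ^ (2 * p) * Ainv_norm (ipH k) (ip0 k) (J k) (a k) \<le> \<epsilon> \<longrightarrow>
          ereal (1 / (inverse (CG1 k) * (1 + CG2 k * (1 + C2 * C3 * C4) * Ainv_norm (ipH k) (ip0 k) (J k) (a k))))
          \<le> (INF uh\<in>Vh h - {0}. SUP vh\<in>Vh h - {0}.
                ereal (cmod (a k uh vh) / (ipnorm (ipH k) uh * ipnorm (ipH k) vh)))"
    using C4 by (auto simp: mult.assoc)
qed

end
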